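(* Let $G$ be a graph with edge set $E$, let $C\subseteq E$ and let $k\ge1$ be an integer. Then $C$ is a circuit of $M_k(G)$ if and only if $\Delta G\langle C\rangle=k$ and $G\langle C\rangle$ is a cacti-graph, i.e. $G\langle C\rangle$ has no leaves and every component of $G\langle C\rangle$ has at least two cycles.
   Context: Graphs are finite, may have loops and parallel edges. A leaf is a vertex incident to exactly one edge, which is not a loop. $\Delta H=|E(H)|-|V(H)|$. For $X\subseteq E$, $G\langle X\rangle$ is the subgraph with edge set $X$ and vertex set the vertices incident to edges of $X$. A cacti-graph is a graph with no isolated vertices, no leaves, and no component that is a cycle. For an integer $k\ge0$, the $k$-circular matroid $M_k(G)$ is the matroid on $E$ whose family of circuits ${\cal C}_k(G)$ is the set of inclusion-minimal members of $\{C\subseteq E: C\neq\emptyset,\ |C|=|V(G\langle C\rangle)|+k\}$ (this family is the circuit family of a matroid). *)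

theory Defs
  imports Main
begin

text \<open>A (finite multi)graph is given by a vertex set V, an edge set E and an incidence
  map ends assigning to each edge its set of end vertices (one vertex for a loop,
  two for a non-loop edge). Parallel edges are distinct edges with equal ends.\<close>

definition graph :: "'v set \<Rightarrow> 'e set \<Rightarrow> ('e \<Rightarrow> 'v set) \<Rightarrow> bool" where
  "graph V E ends \<longleftrightarrow> finite V \<and> finite E \<and>
     (\<forall>e\<in>E. ends e \<subseteq> V \<and> 1 \<le> card (ends e) \<and> card (ends e) \<le> 2)"

definition verts :: "('e \<Rightarrow> 'v set) \<Rightarrow> 'e set \<Rightarrow> 'v set" where
  "verts ends X = \<Union> (ends ` X)"

definition Delta :: "('e \<Rightarrow> 'v set) \<Rightarrow> 'e set \<Rightarrow> int" where
  "Delta ends X = int (card X) - int (card (verts ends X))"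

definition deg :: "('e \<Rightarrow> 'v set) \<Rightarrow> 'e set \<Rightarrow> 'v \<Rightarrow> nat" where
  "deg ends X v = card {e\<in>X. v \<in> ends e \<and> card (ends e) = 2} + 2 * card {e\<in>X. ends e = {v}}"

definition is_leaf :: "('e \<Rightarrow> 'v set) \<Rightarrow> 'e set \<Rightarrow> 'v \<Rightarrow> bool" where
  "is_leaf ends X v \<longleftrightarrow> (\<exists>e\<in>X. {f\<in>X. v \<in> ends f} = {e} \<and> ends e \<noteq> {v})"

definition edge_adj :: "('e \<Rightarrow> 'v set) \<Rightarrow> 'e set \<Rightarrow> ('e \<times> 'e) set" where
  "edge_adj ends Y = {(e, f). e \<in> Y \<and> f \<in> Y \<and> ends e \<inter> ends f \<noteq> {}}"

definition connected_edges :: "('e \<Rightarrow> 'v set) \<Rightarrow> 'e set \<Rightarrow> bool" where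
  "connected_edges ends Y \<longleftrightarrow> Y \<noteq> {} \<and> (\<forall>e\<in>Y. \<forall>f\<in>Y. (e, f) \<in> (edge_adj ends Y)\<^sup>*)"

text \<open>Y is (the edge set of) a connected component of G<X> (G<X> has no isolated vertices,
  so its components are exactly the G<Y> for such Y).\<close>
definition is_component :: "('e \<Rightarrow> 'v set) \<Rightarrow> 'e set \<Rightarrow> 'e set \<Rightarrow> bool" where
  "is_component ends X Y \<longleftrightarrow> Y \<subseteq> X \<and> connected_edges ends Y \<and>
     (\<forall>e\<in>X - Y. ends e \<inter> verts ends Y = {})"

text \<open>G<Y> is a cycle: connected and every vertex has degree 2 (loops and pairs of parallel
  edges are cycles of length 1 and 2).\<close>
definition is_cycle :: "('e \<Rightarrow> 'v set) \<Rightarrow> 'e set \<Rightarrow> bool" where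
  "is_cycle ends Y \<longleftrightarrow> connected_edges ends Y \<and> (\<forall>v\<in>verts ends Y. deg ends Y v = 2)"

definition cacti_graph :: "('e \<Rightarrow> 'v set) \<Rightarrow> 'e set \<Rightarrow> bool" where
  "cacti_graph ends X \<longleftrightarrow>
     (\<forall>v\<in>verts ends X. deg ends X v \<noteq> 0) \<and>
     (\<forall>v\<in>verts ends X. \<not> is_leaf ends X v) \<and>
     (\<forall>Y. is_component ends X Y \<longrightarrow> \<not> is_cycle ends Y)"

definition k_dependent :: "'e set \<Rightarrow> ('e \<Rightarrow> 'v set) \<Rightarrow> nat \<Rightarrow> 'e set \<Rightarrow> bool" where
  "k_dependent E ends k C \<longleftrightarrow> C \<subseteq> E \<and> C \<noteq> {} \<and> card C = card (verts ends C) + k"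

definition k_circuit :: "'v set \<Rightarrow> 'e set \<Rightarrow> ('e \<Rightarrow> 'v set) \<Rightarrow> nat \<Rightarrow> 'e set \<Rightarrow> bool" where
  "k_circuit V E ends k C \<longleftrightarrow> k_dependent E ends k C \<and>
     (\<forall>D. D \<subset> C \<longrightarrow> \<not> k_dependent E ends k D)"

end

theory Submission
  imports Defs
begin

text \<open>Removing one edge lowers \<open>\<Delta>\<close> by at most one, so every nonempty edge set with
  \<open>\<Delta> \<ge> k\<close> contains a nonempty subset with \<open>\<Delta> = k\<close>. Hence the circuits of \<open>M\<^sub>k(G)\<close> are
  the sets \<open>C\<close> with \<open>\<Delta> C = k\<close> all of whose proper subsets have smaller \<open>\<Delta>\<close>, and these are
  exactly the cacti-graphs: deleting a pendant edge does not lower \<open>\<Delta>\<close> and a cycle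
  component has \<open>\<Delta> = 0\<close>; conversely, for \<open>D \<subset> C\<close> the vertices of \<open>G\<langle>C\<rangle>\<close> not covered by
  \<open>D\<close> have degree at least two in \<open>G\<langle>C - D\<rangle>\<close>, so counting degrees shows that they are
  fewer than the edges of \<open>C - D\<close> unless some component of \<open>G\<langle>C - D\<rangle>\<close> is a cycle component
  of \<open>G\<langle>C\<rangle>\<close>. Finally, an inclusion-minimal nonempty edge set with \<open>\<Delta> \<ge> 0\<close> is a cycle, so a
  component with \<open>\<Delta> \<ge> 1\<close> contains one cycle and, after deleting one of its edges, a
  second one.\<close>

definition wf_edges :: "('e \<Rightarrow> 'v set) \<Rightarrow> 'e set \<Rightarrow> bool" where
  "wf_edges ends X \<longleftrightarrow> finite X \<and> (\<forall>e\<in>X. card (ends e) \<in> {1, 2})"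

lemma wf_edges_subset: "wf_edges ends X \<Longrightarrow> Y \<subseteq> X \<Longrightarrow> wf_edges ends Y"
  unfolding wf_edges_def by (auto intro: finite_subset)

lemma wf_edges_if_graph: "graph V E ends \<Longrightarrow> wf_edges ends E"
  unfolding graph_def wf_edges_def by (auto simp: le_Suc_eq numeral_2_eq_2)

lemma finite_verts:
  assumes "wf_edges ends X" shows "finite (verts ends X)"
proof -
  have "finite (ends e)" if "e \<in> X" for e
  proof (rule card_ge_0_finite)
    show "0 < card (ends e)" using assms that unfolding wf_edges_def by auto
  qed
  then show ?thesis using assms unfolding verts_def wf_edges_def by auto
qed

lemma verts_mono: "Y \<subseteq> X \<Longrightarrow> verts ends Y \<subseteq> verts ends X"
  unfolding verts_def by auto

lemma verts_Un: "verts ends (A \<union> B) = verts ends A \<union> verts ends B"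
  unfolding verts_def by auto

lemma Delta_empty [simp]: "Delta ends {} = 0"
  unfolding Delta_def verts_def by simp

lemma Delta_singleton_le_0: "wf_edges ends X \<Longrightarrow> e \<in> X \<Longrightarrow> Delta ends {e} \<le> 0"
  unfolding wf_edges_def Delta_def verts_def by auto

lemma Delta_Un_disjoint:
  assumes "wf_edges ends (A \<union> B)" "A \<inter> B = {}" "verts ends A \<inter> verts ends B = {}"
  shows "Delta ends (A \<union> B) = Delta ends A + Delta ends B"
proof -
  have "wf_edges ends A" "wf_edges ends B" using assms(1) wf_edges_subset by blast+
  then have "finite A" "finite B" "finite (verts ends A)" "finite (verts ends B)"
    using finite_verts by (auto simp: wf_edges_def)
  then show ?thesis
    using assms(2,3) unfolding Delta_def verts_Un by (simp add: card_Un_disjoint)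
qed

lemma Delta_remove_edge_ge:
  assumes "wf_edges ends X" "e \<in> X"
  shows "Delta ends X - 1 \<le> Delta ends (X - {e})"
proof -
  have "card (verts ends (X - {e})) \<le> card (verts ends X)"
    using assms by (intro card_mono finite_verts verts_mono) auto
  moreover have "card (X - {e}) = card X - 1" "card X \<ge> 1"
    using assms unfolding wf_edges_def by (auto simp: Suc_le_eq card_gt_0_iff)
  ultimately show ?thesis unfolding Delta_def by linarith
qed

lemma Delta_remove_pendant_edge:
  assumes "wf_edges ends X" "e \<in> X" "{f\<in>X. v \<in> ends f} = {e}"
  shows "Delta ends X \<le> Delta ends (X - {e})"
proof -
  have v: "v \<in> verts ends X" using assms(2,3) unfolding verts_def by auto
  have "verts ends (X - {e}) \<subseteq> verts ends X - {v}"
    using assms(3) unfolding verts_def by auto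
  then have "card (verts ends (X - {e})) \<le> card (verts ends X) - 1"
    using v finite_verts[OF assms(1)] by (metis card_Diff_singleton card_mono finite_Diff)
  moreover have "card (X - {e}) = card X - 1" "card X \<ge> 1" "card (verts ends X) \<ge> 1"
    using assms v finite_verts[OF assms(1)] unfolding wf_edges_def
    by (auto simp: Suc_le_eq card_gt_0_iff)
  ultimately show ?thesis unfolding Delta_def by linarith
qed

lemma Delta_diff:
  assumes "wf_edges ends X" "D \<subseteq> X"
  shows "Delta ends X - Delta ends D = int (card (X - D)) - int (card (verts ends X - verts ends D))"
proof -
  have fin: "finite X" "finite (verts ends X)"
    using assms(1) finite_verts unfolding wf_edges_def by auto
  have "verts ends D \<subseteq> verts ends X" using assms(2) by (rule verts_mono)
  then have "card (verts ends X - verts ends D) = card (verts ends X) - card (verts ends D)"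
    "card (verts ends D) \<le> card (verts ends X)"
    using fin(2) by (auto intro: card_Diff_subset card_mono finite_subset)
  moreover have "card (X - D) = card X - card D" "card D \<le> card X"
    using fin(1) assms(2) by (auto intro: card_Diff_subset card_mono finite_subset)
  ultimately show ?thesis unfolding Delta_def by simp
qed

lemma exists_subset_Delta_eq:
  assumes "wf_edges ends D" "j \<le> Delta ends D" "1 \<le> j"
  shows "\<exists>D'\<subseteq>D. D' \<noteq> {} \<and> Delta ends D' = j"
  using assms
proof (induction "card D" arbitrary: D rule: less_induct)
  case less
  show ?case
  proof (cases "Delta ends D = j")
    case True
    then show ?thesis using less.prems by force
  next
    case False
    have "D \<noteq> {}" using less.prems by auto
    then obtain e where e: "e \<in> D" by blast
    have "j \<le> Delta ends (D - {e})"
      using Delta_remove_edge_ge[OF less.prems(1) e] less.prems(2) False by linarith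
    moreover have "card (D - {e}) < card D"
      using less.prems(1) e unfolding wf_edges_def by (meson card_Diff1_less)
    ultimately show ?thesis
      using less.hyps[of "D - {e}"] less.prems wf_edges_subset[of ends D "D - {e}"] by blast
  qed
qed

lemma deg_Un_disjoint:
  assumes "finite A" "finite B" "A \<inter> B = {}"
  shows "deg ends (A \<union> B) v = deg ends A v + deg ends B v"
proof -
  have "{e\<in>A \<union> B. P e} = {e\<in>A. P e} \<union> {e\<in>B. P e}" for P by auto
  moreover have "card ({e\<in>A. P e} \<union> {e\<in>B. P e}) = card {e\<in>A. P e} + card {e\<in>B. P e}" for P
    using assms by (intro card_Un_disjoint) auto
  ultimately show ?thesis unfolding deg_def by simp
qed

lemma deg_mono: "finite Y \<Longrightarrow> Z \<subseteq> Y \<Longrightarrow> deg ends Z v \<le> deg ends Y v"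
  using deg_Un_disjoint[of Z "Y - Z" ends v] by (simp add: Un_absorb1 finite_subset)

lemma deg_singleton:
  "deg ends {e} v = (if v \<in> ends e \<and> card (ends e) = 2 then 1 else 0) + (if ends e = {v} then 2 else 0)"
  unfolding deg_def by (simp add: Collect_conv_if)

lemma deg_eq_sum_singletons: "finite X \<Longrightarrow> deg ends X v = (\<Sum>e\<in>X. deg ends {e} v)"
proof (induction X rule: finite_induct)
  case empty
  then show ?case by (simp add: deg_def)
next
  case (insert e X)
  have "deg ends (insert e X) v = deg ends {e} v + deg ends X v"
    using deg_Un_disjoint[of "{e}" X ends v] insert by simp
  then show ?case using insert by simp
qed

lemma deg_singleton_pos:
  "wf_edges ends X \<Longrightarrow> e \<in> X \<Longrightarrow> v \<in> ends e \<Longrightarrow> 1 \<le> deg ends {e} v"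
  unfolding wf_edges_def by (auto simp: deg_singleton card_1_singleton_iff)

lemma sum_deg_singleton:
  assumes "card (ends e) \<in> {1, 2}" "finite S" "ends e \<subseteq> S"
  shows "(\<Sum>v\<in>S. deg ends {e} v) = 2"
proof -
  have "(\<Sum>v\<in>S. deg ends {e} v) = (\<Sum>v\<in>ends e. deg ends {e} v)"
    using assms(2,3) by (intro sum.mono_neutral_right) (auto simp: deg_singleton)
  also have "\<dots> = 2"
  proof (cases "card (ends e) = 2")
    case True
    then have "ends e \<noteq> {v}" for v by auto
    then show ?thesis using True by (simp add: deg_singleton)
  next
    case False
    then show ?thesis using assms(1) by (auto simp: deg_singleton card_1_singleton_iff)
  qed
  finally show ?thesis .
qed

lemma sum_deg_verts:
  assumes "wf_edges ends X"
  shows "(\<Sum>v\<in>verts ends X. deg ends X v) = 2 * card X"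
proof -
  have fin: "finite X" "finite (verts ends X)"
    using assms finite_verts[OF assms] unfolding wf_edges_def by auto
  have "(\<Sum>v\<in>verts ends X. deg ends X v) = (\<Sum>e\<in>X. \<Sum>v\<in>verts ends X. deg ends {e} v)"
    unfolding deg_eq_sum_singletons[OF fin(1)] by (rule sum.swap)
  also have "\<dots> = (\<Sum>e\<in>X. 2)"
    using assms fin(2) unfolding wf_edges_def verts_def
    by (intro sum.cong refl sum_deg_singleton) auto
  finally show ?thesis by simp
qed

lemma deg_pos:
  assumes "wf_edges ends X" "v \<in> verts ends X" shows "1 \<le> deg ends X v"
proof -
  obtain e where e: "e \<in> X" "v \<in> ends e" using assms(2) unfolding verts_def by auto
  have "1 \<le> deg ends {e} v"
    using deg_singleton_pos[OF assms(1) e] .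
  also have "\<dots> \<le> deg ends X v"
    using assms(1) e unfolding wf_edges_def by (intro deg_mono) auto
  finally show ?thesis .
qed

lemma deg_subset_eq:
  assumes "Z \<subseteq> Y" "\<forall>g\<in>Y. v \<in> ends g \<longrightarrow> g \<in> Z"
  shows "deg ends Z v = deg ends Y v"
proof -
  have "{e\<in>Z. v \<in> ends e \<and> P e} = {e\<in>Y. v \<in> ends e \<and> P e}" for P
    using assms by auto
  moreover have "{e\<in>Z. ends e = {v}} = {e\<in>Y. ends e = {v}}" using assms by auto
  ultimately show ?thesis unfolding deg_def by simp
qed

lemma deg_remove_edge:
  "finite X \<Longrightarrow> e \<in> X \<Longrightarrow> deg ends X v = deg ends {e} v + deg ends (X - {e}) v"
  using deg_Un_disjoint[of "{e}" "X - {e}" ends v] by (simp add: insert_absorb)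

lemma mem_if_deg_eq:
  assumes "wf_edges ends Y" "Z \<subseteq> Y" "deg ends Z v = deg ends Y v" "g \<in> Y" "v \<in> ends g"
  shows "g \<in> Z"
proof (rule ccontr)
  assume "g \<notin> Z"
  then have "deg ends Z v \<le> deg ends (Y - {g}) v"
    using assms(1,2) unfolding wf_edges_def by (intro deg_mono) auto
  moreover have "1 \<le> deg ends {g} v"
    using deg_singleton_pos[OF assms(1,4,5)] .
  moreover have "deg ends Y v = deg ends {g} v + deg ends (Y - {g}) v"
    using assms(1,4) unfolding wf_edges_def by (intro deg_remove_edge) auto
  ultimately show False using assms(3) by linarith
qed

lemma deg_ge_2_if_not_leaf:
  assumes "wf_edges ends X" "v \<in> verts ends X" "\<not> is_leaf ends X v"
  shows "2 \<le> deg ends X v"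
proof (rule ccontr)
  assume "\<not> 2 \<le> deg ends X v"
  then have deg1: "deg ends X v = 1" using deg_pos[OF assms(1,2)] by simp
  obtain e where e: "e \<in> X" "v \<in> ends e" using assms(2) unfolding verts_def by auto
  have split: "deg ends X v = deg ends {e} v + deg ends (X - {e}) v"
    using assms(1) e(1) unfolding wf_edges_def by (intro deg_remove_edge) auto
  then have "deg ends (X - {e}) v = 0" using deg1 deg_singleton_pos[OF assms(1) e] by simp
  then have "v \<notin> verts ends (X - {e})"
    using deg_pos[of ends "X - {e}"] wf_edges_subset[OF assms(1)] by fastforce
  then have "{f\<in>X. v \<in> ends f} = {e}" using e unfolding verts_def by auto
  moreover have "ends e \<noteq> {v}" using split deg1 by (auto simp: deg_singleton)
  ultimately show False using assms(3) e(1) unfolding is_leaf_def by blast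
qed

lemma handshake_tight:
  assumes "wf_edges ends F" "W \<subseteq> verts ends F" "\<forall>w\<in>W. 2 \<le> deg ends F w" "card F \<le> card W"
  shows "verts ends F = W" "\<forall>w\<in>W. deg ends F w = 2"
proof -
  have fin: "finite (verts ends F)" using finite_verts[OF assms(1)] .
  have "2 * card F = (\<Sum>w\<in>W. deg ends F w) + (\<Sum>w\<in>verts ends F - W. deg ends F w)"
    using sum_deg_verts[OF assms(1)] sum.subset_diff[OF assms(2) fin, of "deg ends F"] by linarith
  moreover have "(\<Sum>w\<in>W. deg ends F w) = (\<Sum>w\<in>W. deg ends F w - 2) + 2 * card W"
  proof -
    have "(\<Sum>w\<in>W. deg ends F w) = (\<Sum>w\<in>W. (deg ends F w - 2) + 2)"
      using assms(3) by (intro sum.cong) auto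
    also have "\<dots> = (\<Sum>w\<in>W. deg ends F w - 2) + (\<Sum>w\<in>W. 2)"
      by (rule sum.distrib)
    finally show ?thesis by simp
  qed
  moreover have "card (verts ends F - W) \<le> (\<Sum>w\<in>verts ends F - W. deg ends F w)"
    using deg_pos[OF assms(1)] sum_mono[of "verts ends F - W" "\<lambda>_. 1" "deg ends F"] by auto
  ultimately have "(\<Sum>w\<in>W. deg ends F w - 2) = 0" "card (verts ends F - W) = 0"
    using assms(4) by linarith+
  then show "verts ends F = W" "\<forall>w\<in>W. deg ends F w = 2"
    using assms(2,3) fin finite_subset[OF assms(2) fin] by fastforce+
qed

lemma edge_adj_rtrancl_sym:
  "(g, h) \<in> (edge_adj ends Y)\<^sup>* \<Longrightarrow> (h, g) \<in> (edge_adj ends Y)\<^sup>*"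
proof -
  have "(edge_adj ends Y)\<inverse> = edge_adj ends Y" unfolding edge_adj_def by auto
  then show "(g, h) \<in> (edge_adj ends Y)\<^sup>* \<Longrightarrow> (h, g) \<in> (edge_adj ends Y)\<^sup>*"
    by (metis rtrancl_converseI)
qed

lemma exists_component:
  assumes "e \<in> F"
  obtains A where "e \<in> A" "is_component ends F A"
proof -
  let ?R = "(edge_adj ends F)\<^sup>*"
  define A where "A = {g\<in>F. (e, g) \<in> ?R}"
  have closed: "ends g \<inter> verts ends A = {}" if "g \<in> F - A" for g
  proof (rule ccontr)
    assume "ends g \<inter> verts ends A \<noteq> {}"
    then obtain h where "h \<in> A" "ends h \<inter> ends g \<noteq> {}" unfolding verts_def by auto
    then have "(e, g) \<in> ?R"
      using that unfolding A_def edge_adj_def by (auto intro: rtrancl_into_rtrancl)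
    then show False using that unfolding A_def by auto
  qed
  have "(e, g) \<in> (edge_adj ends A)\<^sup>*" if "g \<in> A" for g
  proof -
    have "(e, g) \<in> ?R" using that unfolding A_def by auto
    then show ?thesis
    proof (induction rule: rtrancl_induct)
      case (step g h)
      then have "g \<in> A" "h \<in> A" unfolding A_def edge_adj_def
        by (auto intro: rtrancl_into_rtrancl)
      then have "(g, h) \<in> edge_adj ends A" using step(2) unfolding edge_adj_def by auto
      then show ?case using step(3) by (rule rtrancl_into_rtrancl[rotated])
    qed simp
  qed
  then have "connected_edges ends A"
    using assms edge_adj_rtrancl_sym unfolding connected_edges_def A_def
    by (metis (no_types, lifting) empty_iff mem_Collect_eq rtrancl.rtrancl_refl rtrancl_trans)
  then show thesis
    using that[of A] assms closed unfolding is_component_def A_def by auto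
qed

lemma is_component_superset:
  assumes "is_component ends F A" "F \<subseteq> X" "\<forall>g\<in>X - F. ends g \<inter> verts ends A = {}"
  shows "is_component ends X A"
  using assms unfolding is_component_def by blast

lemma Delta_component_split:
  assumes "wf_edges ends X" "is_component ends X Y"
  shows "Delta ends X = Delta ends Y + Delta ends (X - Y)"
proof -
  have "Y \<subseteq> X" "verts ends Y \<inter> verts ends (X - Y) = {}"
    using assms(2) unfolding is_component_def verts_def by blast+
  then show ?thesis using assms(1) Delta_Un_disjoint[of ends Y "X - Y"] by (simp add: Un_absorb1)
qed

lemma deg_component:
  "is_component ends X Y \<Longrightarrow> v \<in> verts ends Y \<Longrightarrow> deg ends Y v = deg ends X v"
  unfolding is_component_def by (intro deg_subset_eq) auto

lemma Delta_cycle: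
  assumes "wf_edges ends Y" "is_cycle ends Y" shows "Delta ends Y = 0"
proof -
  have "2 * card Y = (\<Sum>v\<in>verts ends Y. 2)"
    using assms sum_deg_verts[OF assms(1)] unfolding is_cycle_def by simp
  then show ?thesis unfolding Delta_def by simp
qed

lemma cycle_subset_eq:
  assumes "wf_edges ends Y" "Z \<subseteq> Y" "is_cycle ends Z" "is_cycle ends Y"
  shows "Z = Y"
proof -
  obtain z where z: "z \<in> Z" using assms(3) unfolding is_cycle_def connected_edges_def by auto
  have "g \<in> Z" if "g \<in> Y" for g
  proof -
    have "(z, g) \<in> (edge_adj ends Y)\<^sup>*"
      using assms(2,4) z that unfolding is_cycle_def connected_edges_def by auto
    then show ?thesis
    proof (induction rule: rtrancl_induct)
      case (step g h)
      then obtain v where v: "v \<in> ends g" "v \<in> ends h" "h \<in> Y" unfolding edge_adj_def by auto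
      then have "v \<in> verts ends Z" "v \<in> verts ends Y"
        using step(3) assms(2) unfolding verts_def by auto
      then have "deg ends Z v = deg ends Y v" using assms(3,4) unfolding is_cycle_def by simp
      then show ?case using mem_if_deg_eq[OF assms(1,2)] v by blast
    qed (use z in simp)
  qed
  then show ?thesis using assms(2) by auto
qed

lemma is_cycle_if_Delta_minimal:
  assumes "wf_edges ends F" "F \<noteq> {}" "0 \<le> Delta ends F"
    and minimal: "\<And>G. G \<subset> F \<Longrightarrow> G \<noteq> {} \<Longrightarrow> Delta ends G < 0"
  shows "is_cycle ends F"
proof -
  have remove: "F - {e} = {}" if "e \<in> F" "0 \<le> Delta ends (F - {e})" for e
    using minimal[of "F - {e}"] that by auto
  obtain e where e: "e \<in> F" using assms(2) by auto
  have Delta0: "Delta ends F = 0"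
  proof (rule ccontr)
    assume "Delta ends F \<noteq> 0"
    then have "0 \<le> Delta ends (F - {e})" using assms(3) Delta_remove_edge_ge[OF assms(1) e] by simp
    then have "F = {e}" using remove[OF e] e by auto
    then show False
      using \<open>Delta ends F \<noteq> 0\<close> assms(3) Delta_singleton_le_0[OF assms(1) e] by simp
  qed
  obtain A where A: "e \<in> A" "is_component ends F A" using exists_component[OF e] .
  have "A = F"
  proof (rule ccontr)
    assume "A \<noteq> F"
    then have "Delta ends A < 0" "Delta ends (F - A) < 0"
      using A minimal unfolding is_component_def by blast+
    then show False using Delta_component_split[OF assms(1) A(2)] Delta0 by simp
  qed
  have "2 \<le> deg ends F v" if v: "v \<in> verts ends F" for v
  proof (rule deg_ge_2_if_not_leaf[OF assms(1) v], rule notI)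
    assume "is_leaf ends F v"
    then obtain f where f: "f \<in> F" "{g\<in>F. v \<in> ends g} = {f}" "ends f \<noteq> {v}"
      unfolding is_leaf_def by blast
    then have "F = {f}" using remove Delta_remove_pendant_edge[OF assms(1)] Delta0 by fastforce
    then have "card (ends f) = 1" using Delta0 unfolding Delta_def verts_def by simp
    moreover have "v \<in> ends f" using f(2) by blast
    ultimately show False using f(3) by (auto simp: card_1_singleton_iff)
  qed
  then have "\<forall>v\<in>verts ends F. deg ends F v = 2"
    using handshake_tight(2)[OF assms(1) order_refl] Delta0 unfolding Delta_def by simp
  then show ?thesis using A \<open>A = F\<close> unfolding is_cycle_def is_component_def by simp
qed

lemma exists_cycle_if_Delta_nonneg:
  assumes "wf_edges ends F" "F \<noteq> {}" "0 \<le> Delta ends F"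
  obtains Z where "Z \<subseteq> F" "is_cycle ends Z"
proof -
  let ?S = "{G. G \<subseteq> F \<and> G \<noteq> {} \<and> 0 \<le> Delta ends G}"
  have "finite ?S" using assms(1) unfolding wf_edges_def by simp
  then obtain Z where Z: "Z \<in> ?S" "\<forall>G\<in>?S. G \<subseteq> Z \<longrightarrow> Z = G"
    using finite_has_minimal2[of ?S F] assms by auto
  have "is_cycle ends Z"
  proof (rule is_cycle_if_Delta_minimal)
    show "wf_edges ends Z" using Z(1) wf_edges_subset[OF assms(1)] by auto
    show "Z \<noteq> {}" "0 \<le> Delta ends Z" using Z(1) by auto
    show "Delta ends G < 0" if "G \<subset> Z" "G \<noteq> {}" for G
    proof (rule ccontr)
      assume "\<not> Delta ends G < 0"
      then have "G \<in> ?S" using that Z(1) by auto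
      then show False using Z(2) that by blast
    qed
  qed
  then show thesis using that Z by blast
qed

lemma exists_two_cycles_if_Delta_pos:
  assumes "wf_edges ends Y" "1 \<le> Delta ends Y"
  shows "\<exists>Z1 Z2. Z1 \<subseteq> Y \<and> Z2 \<subseteq> Y \<and> Z1 \<noteq> Z2 \<and> is_cycle ends Z1 \<and> is_cycle ends Z2"
proof -
  have "Y \<noteq> {}" using assms(2) by auto
  then obtain Z1 where Z1: "Z1 \<subseteq> Y" "is_cycle ends Z1"
    using exists_cycle_if_Delta_nonneg[OF assms(1)] assms(2) by force
  then obtain e where e: "e \<in> Z1" unfolding is_cycle_def connected_edges_def by blast
  then have "e \<in> Y" using Z1 by blast
  have "Y \<noteq> {e}"
    using assms(2) Delta_singleton_le_0[OF assms(1) \<open>e \<in> Y\<close>] by auto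
  then have "Y - {e} \<noteq> {}" using \<open>e \<in> Y\<close> by auto
  moreover have "wf_edges ends (Y - {e})" using wf_edges_subset[OF assms(1)] by blast
  moreover have "0 \<le> Delta ends (Y - {e})"
    using Delta_remove_edge_ge[OF assms(1) \<open>e \<in> Y\<close>] assms(2) by linarith
  ultimately obtain Z2 where "Z2 \<subseteq> Y - {e}" "is_cycle ends Z2"
    using exists_cycle_if_Delta_nonneg by metis
  then show ?thesis using Z1 e by blast
qed

lemma Delta_psubset_less_if_cacti:
  assumes "wf_edges ends X" "cacti_graph ends X" "D \<subset> X"
  shows "Delta ends D < Delta ends X"
proof -
  define F where "F = X - D"
  define W where "W = verts ends X - verts ends D"
  have wf_F: "wf_edges ends F" using wf_edges_subset[OF assms(1)] unfolding F_def by blast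
  have edges_at_W: "g \<in> F" if "w \<in> W" "g \<in> X" "w \<in> ends g" for w g
    using that unfolding W_def F_def verts_def by auto
  have W_F: "W \<subseteq> verts ends F" using edges_at_W unfolding W_def verts_def by blast
  have deg_W: "2 \<le> deg ends F w" if "w \<in> W" for w
  proof -
    have "deg ends F w = deg ends X w"
      using edges_at_W[OF that] unfolding F_def by (intro deg_subset_eq) auto
    then show ?thesis
      using deg_ge_2_if_not_leaf[OF assms(1)] assms(2) that unfolding W_def cacti_graph_def by auto
  qed
  have "card W < card F"
  proof (rule ccontr)
    assume "\<not> card W < card F"
    then have "verts ends F = W" "\<forall>w\<in>W. deg ends F w = 2"
      using handshake_tight[OF wf_F W_F] deg_W by auto
    obtain e where "e \<in> F" using assms(3) unfolding F_def by auto
    then obtain A where A: "is_component ends F A" using exists_component by metis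
    have verts_A: "verts ends A \<subseteq> W"
      using A verts_mono \<open>verts ends F = W\<close> unfolding is_component_def by metis
    have "ends g \<subseteq> verts ends D" if "g \<in> X - F" for g
      using that unfolding F_def verts_def by auto
    then have "\<forall>g\<in>X - F. ends g \<inter> verts ends A = {}" using verts_A unfolding W_def by blast
    then have "is_component ends X A"
      using is_component_superset[OF A] unfolding F_def by blast
    moreover have "is_cycle ends A"
      using A verts_A deg_component[OF A] \<open>\<forall>w\<in>W. deg ends F w = 2\<close>
      unfolding is_cycle_def is_component_def by auto
    ultimately show False using assms(2) unfolding cacti_graph_def by blast
  qed
  moreover have "Delta ends X - Delta ends D = int (card F) - int (card W)"
    unfolding F_def W_def using assms(3) by (intro Delta_diff[OF assms(1)]) auto
  ultimately show ?thesis by linarith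
qed

lemma cacti_if_Delta_psubset_less:
  assumes "wf_edges ends X" "\<forall>D\<subset>X. Delta ends D < Delta ends X"
  shows "cacti_graph ends X"
  unfolding cacti_graph_def
proof (intro conjI ballI allI impI notI)
  show "deg ends X v = 0 \<Longrightarrow> False" if "v \<in> verts ends X" for v
    using deg_pos[OF assms(1) that] by simp
  show False if "v \<in> verts ends X" and leaf: "is_leaf ends X v" for v
  proof -
    obtain e where "e \<in> X" "{f\<in>X. v \<in> ends f} = {e}"
      using leaf unfolding is_leaf_def by blast
    then show False
      using Delta_remove_pendant_edge[OF assms(1)] assms(2)[rule_format, of "X - {e}"]
      by fastforce
  qed
  show False if "is_component ends X Y" "is_cycle ends Y" for Y
  proof -
    have "Y \<subseteq> X" "Y \<noteq> {}" using that(1) unfolding is_component_def connected_edges_def by auto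
    then have "Delta ends (X - Y) < Delta ends X" using assms(2) by blast
    then show False
      using Delta_component_split[OF assms(1) that(1)]
        Delta_cycle[OF wf_edges_subset[OF assms(1) \<open>Y \<subseteq> X\<close>] that(2)] by simp
  qed
qed

lemma cacti_graph_iff_Delta_psubset_less:
  "wf_edges ends X \<Longrightarrow> cacti_graph ends X \<longleftrightarrow> (\<forall>D\<subset>X. Delta ends D < Delta ends X)"
  by (metis Delta_psubset_less_if_cacti cacti_if_Delta_psubset_less)

lemma cacti_graph_iff_two_cycles:
  assumes "wf_edges ends X"
  shows "cacti_graph ends X \<longleftrightarrow> (\<forall>v\<in>verts ends X. \<not> is_leaf ends X v) \<and>
    (\<forall>Y. is_component ends X Y \<longrightarrow>
       (\<exists>Z1 Z2. Z1 \<subseteq> Y \<and> Z2 \<subseteq> Y \<and> Z1 \<noteq> Z2 \<and> is_cycle ends Z1 \<and> is_cycle ends Z2))"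
proof (intro iffI conjI allI impI)
  assume cacti: "cacti_graph ends X"
  then show "\<forall>v\<in>verts ends X. \<not> is_leaf ends X v" unfolding cacti_graph_def by blast
  fix Y assume Y: "is_component ends X Y"
  then have "Y \<subseteq> X" "Y \<noteq> {}" unfolding is_component_def connected_edges_def by auto
  then have "Delta ends (X - Y) < Delta ends X"
    using Delta_psubset_less_if_cacti[OF assms cacti] by blast
  then have "1 \<le> Delta ends Y" using Delta_component_split[OF assms Y] by simp
  then show "\<exists>Z1 Z2. Z1 \<subseteq> Y \<and> Z2 \<subseteq> Y \<and> Z1 \<noteq> Z2 \<and> is_cycle ends Z1 \<and> is_cycle ends Z2"
    using exists_two_cycles_if_Delta_pos wf_edges_subset[OF assms \<open>Y \<subseteq> X\<close>] by blast
next
  assume "(\<forall>v\<in>verts ends X. \<not> is_leaf ends X v) \<and>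
    (\<forall>Y. is_component ends X Y \<longrightarrow>
       (\<exists>Z1 Z2. Z1 \<subseteq> Y \<and> Z2 \<subseteq> Y \<and> Z1 \<noteq> Z2 \<and> is_cycle ends Z1 \<and> is_cycle ends Z2))"
  then have no_leaf: "\<forall>v\<in>verts ends X. \<not> is_leaf ends X v"
    and two_cycles: "\<And>Y. is_component ends X Y \<Longrightarrow>
       \<exists>Z1 Z2. Z1 \<subseteq> Y \<and> Z2 \<subseteq> Y \<and> Z1 \<noteq> Z2 \<and> is_cycle ends Z1 \<and> is_cycle ends Z2"
    by blast+
  have "\<not> is_cycle ends Y" if Y: "is_component ends X Y" for Y
  proof
    assume "is_cycle ends Y"
    moreover have "wf_edges ends Y" using Y wf_edges_subset[OF assms] unfolding is_component_def by blast
    moreover obtain Z1 Z2 where "Z1 \<subseteq> Y" "Z2 \<subseteq> Y" "Z1 \<noteq> Z2" "is_cycle ends Z1" "is_cycle ends Z2"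
      using two_cycles[OF Y] by blast
    ultimately show False using cycle_subset_eq by metis
  qed
  then show "cacti_graph ends X"
    using no_leaf deg_pos[OF assms] unfolding cacti_graph_def by fastforce
qed

lemma k_dependent_iff_Delta:
  "k_dependent E ends k D \<longleftrightarrow> D \<subseteq> E \<and> D \<noteq> {} \<and> Delta ends D = int k"
  unfolding k_dependent_def Delta_def by auto

lemma k_circuit_iff_Delta_psubset_less:
  assumes "wf_edges ends C" "C \<subseteq> E" "1 \<le> k"
  shows "k_circuit V E ends k C \<longleftrightarrow> Delta ends C = int k \<and> (\<forall>D\<subset>C. Delta ends D < Delta ends C)"
proof
  assume circuit: "k_circuit V E ends k C"
  then have Delta_C: "Delta ends C = int k"
    unfolding k_circuit_def k_dependent_iff_Delta by blast
  have "Delta ends D < int k" if "D \<subset> C" for D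
  proof (rule ccontr)
    assume "\<not> Delta ends D < int k"
    then have "int k \<le> Delta ends D" by simp
    moreover have "wf_edges ends D" using wf_edges_subset[OF assms(1)] that by blast
    ultimately obtain D' where "D' \<subseteq> D" "D' \<noteq> {}" "Delta ends D' = int k"
      using exists_subset_Delta_eq[of ends D "int k"] assms(3) by auto
    then have "D' \<subset> C" "k_dependent E ends k D'"
      using that assms(2) unfolding k_dependent_iff_Delta by auto
    then show False using circuit unfolding k_circuit_def by blast
  qed
  then show "Delta ends C = int k \<and> (\<forall>D\<subset>C. Delta ends D < Delta ends C)"
    using Delta_C by simp
next
  assume H: "Delta ends C = int k \<and> (\<forall>D\<subset>C. Delta ends D < Delta ends C)"
  then have "C \<noteq> {}" using assms(3) by auto
  moreover have "\<not> k_dependent E ends k D" if "D \<subset> C" for D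
  proof -
    have "Delta ends D < int k" using H[THEN conjunct2, rule_format, OF that] H by simp
    then show ?thesis unfolding k_dependent_iff_Delta by simp
  qed
  ultimately show "k_circuit V E ends k C"
    using H assms(2) unfolding k_circuit_def k_dependent_iff_Delta by blast
qed

theorem mainTheorem8:
  fixes V :: "'v set" and E :: "'e set" and ends :: "'e \<Rightarrow> 'v set"
    and C :: "'e set" and k :: nat
  assumes "graph V E ends" and "C \<subseteq> E" and "k \<ge> 1"
  shows "(k_circuit V E ends k C \<longleftrightarrow> Delta ends C = int k \<and> cacti_graph ends C)
       \<and> (k_circuit V E ends k C \<longleftrightarrow> Delta ends C = int k \<and>
            (\<forall>v\<in>verts ends C. \<not> is_leaf ends C v) \<and>
            (\<forall>Y. is_component ends C Y \<longrightarrow>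
               (\<exists>Z1 Z2. Z1 \<subseteq> Y \<and> Z2 \<subseteq> Y \<and> Z1 \<noteq> Z2 \<and> is_cycle ends Z1 \<and> is_cycle ends Z2)))"
proof -
  have wf: "wf_edges ends C" using wf_edges_if_graph[OF assms(1)] assms(2) by (rule wf_edges_subset)
  have "k_circuit V E ends k C \<longleftrightarrow> Delta ends C = int k \<and> cacti_graph ends C"
    using k_circuit_iff_Delta_psubset_less[OF wf assms(2,3)] cacti_graph_iff_Delta_psubset_less[OF wf]
    by blast
  then show ?thesis using cacti_graph_iff_two_cycles[OF wf] by blast
qed

end
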